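(* For every $k\geq 2$, there exists a pair of $2k$-regular graphs that are cospectral with respect to the adjacency matrix and have different zero forcing numbers.
   Context: Graphs are finite, simple, undirected. The zero forcing number $Z(G)$ is the minimum size of a set $S\subseteq V(G)$ such that, if the vertices of $S$ are colored blue and all others white, repeated application of the rule "a blue vertex with exactly one white neighbor forces that neighbor to become blue" eventually makes every vertex blue. *)

theory Defs
  imports "Jordan_Normal_Form.Char_Poly"
begin

definition simple_graph :: "nat \<Rightarrow> (nat \<Rightarrow> nat \<Rightarrow> bool) \<Rightarrow> bool" where
  "simple_graph n E \<longleftrightarrow>
     (\<forall>u v. E u v \<longrightarrow> u < n \<and> v < n) \<and> (\<forall>u v. E u v \<longrightarrow> E v u) \<and> (\<forall>u. \<not> E u u)"

definition regular :: "nat \<Rightarrow> (nat \<Rightarrow> nat \<Rightarrow> bool) \<Rightarrow> nat \<Rightarrow> bool" where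
  "regular n E d \<longleftrightarrow> (\<forall>v<n. card {u. u < n \<and> E v u} = d)"

definition adj_matrix :: "nat \<Rightarrow> (nat \<Rightarrow> nat \<Rightarrow> bool) \<Rightarrow> real mat" where
  "adj_matrix n E = mat n n (\<lambda>(i, j). if E i j then 1 else 0)"

text \<open>Cospectral: adjacency matrices have the same characteristic polynomial
  (same eigenvalues with multiplicities; in particular same order).\<close>
definition cospectral ::
  "nat \<Rightarrow> (nat \<Rightarrow> nat \<Rightarrow> bool) \<Rightarrow> nat \<Rightarrow> (nat \<Rightarrow> nat \<Rightarrow> bool) \<Rightarrow> bool" where
  "cospectral n E m F \<longleftrightarrow> char_poly (adj_matrix n E) = char_poly (adj_matrix m F)"

inductive blue :: "nat \<Rightarrow> (nat \<Rightarrow> nat \<Rightarrow> bool) \<Rightarrow> nat set \<Rightarrow> nat \<Rightarrow> bool"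
  for n E S where
  init: "v \<in> S \<Longrightarrow> blue n E S v"
| force: "\<lbrakk> u < n; v < n; blue n E S u; E u v;
           \<forall>w. w < n \<and> E u w \<and> w \<noteq> v \<longrightarrow> blue n E S w \<rbrakk> \<Longrightarrow> blue n E S v"

definition zero_forcing_set :: "nat \<Rightarrow> (nat \<Rightarrow> nat \<Rightarrow> bool) \<Rightarrow> nat set \<Rightarrow> bool" where
  "zero_forcing_set n E S \<longleftrightarrow> S \<subseteq> {..<n} \<and> (\<forall>v<n. blue n E S v)"

definition zero_forcing_number :: "nat \<Rightarrow> (nat \<Rightarrow> nat \<Rightarrow> bool) \<Rightarrow> nat" where
  "zero_forcing_number n E = (LEAST k. \<exists>S. zero_forcing_set n E S \<and> card S = k)"

end

theory Submission
  imports Defs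
begin

text \<open>
  Let \<open>H\<close> be a 5-regular graph on \<open>n\<^sub>0\<close> vertices and \<open>H'\<close> its Godsil-McKay switch with
  respect to a 4-set \<open>D\<close>. Adding \<open>q\<close> disjoint copies of \<open>K\<^sub>6\<close> to both and taking complements
  gives \<open>(n - 6)\<close>-regular graphs \<open>G\<close> and \<open>F\<close> on \<open>n = n\<^sub>0 + 6q\<close> vertices. Switching commutes
  with complementation and with adding components that avoid \<open>D\<close>, so \<open>F\<close> is the switch of \<open>G\<close>
  and hence cospectral with it.

  The first force from a zero forcing set \<open>S\<close> of a \<open>d\<close>-regular graph is made by a vertex \<open>u\<close>
  with \<open>N[u] - {v} \<subseteq> S\<close>, so \<open>|S| \<le> d\<close> implies \<open>S \<subseteq> N[u]\<close>. No vertex of \<open>N[u]\<close> can then force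
  out of \<open>N[u]\<close> unless a neighbour \<open>w\<close> of \<open>u\<close> has exactly one neighbour outside \<open>N[u]\<close>. In \<open>G\<close>
  these neighbours form \<open>N\<^sub>H(u) - N\<^sub>H(w)\<close>, which has five elements unless \<open>u, w\<close> both lie in
  the base, and \<open>H\<close> is chosen so that it is never a singleton; hence \<open>Z(G) > n - 6\<close>. In \<open>F\<close>
  an explicit chain of six forces inside the base gives \<open>Z(F) \<le> n - 6\<close>. Base graphs on 10, 12
  and 14 vertices cover every degree \<open>2k \<ge> 4\<close>.
\<close>

section \<open>Complements and added cliques\<close>

definition graph_complement :: "nat \<Rightarrow> (nat \<Rightarrow> nat \<Rightarrow> bool) \<Rightarrow> nat \<Rightarrow> nat \<Rightarrow> bool" where
  "graph_complement n E u v \<longleftrightarrow> u < n \<and> v < n \<and> u \<noteq> v \<and> \<not> E u v"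

definition add_cliques :: "nat \<Rightarrow> nat \<Rightarrow> nat \<Rightarrow> (nat \<Rightarrow> nat \<Rightarrow> bool) \<Rightarrow> nat \<Rightarrow> nat \<Rightarrow> bool" where
  "add_cliques n0 c q E u v \<longleftrightarrow> (u < n0 \<and> v < n0 \<and> E u v) \<or>
     (n0 \<le> u \<and> n0 \<le> v \<and> u < n0 + c * q \<and> v < n0 + c * q \<and> u \<noteq> v \<and>
      (u - n0) div c = (v - n0) div c)"

lemma simple_graphD:
  assumes "simple_graph n E" "E u v"
  shows "u < n" "v < n" "E v u" "u \<noteq> v"
  using assms unfolding simple_graph_def by blast+

lemma card_neighbours:
  assumes "simple_graph n E" "regular n E d" "u < n"
  shows "card {v. E u v} = d"
proof -
  have "{v. E u v} = {v. v < n \<and> E u v}"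
    using assms(1) by (auto dest: simple_graphD)
  then show ?thesis
    using assms(2,3) unfolding regular_def by simp
qed

lemma simple_graph_complement: "simple_graph n E \<Longrightarrow> simple_graph n (graph_complement n E)"
  unfolding simple_graph_def graph_complement_def by blast

lemma regular_complement:
  assumes "simple_graph n E" "regular n E d"
  shows "regular n (graph_complement n E) (n - 1 - d)"
  unfolding regular_def
proof (intro allI impI)
  fix v assume "v < n"
  have "{u. u < n \<and> graph_complement n E v u} = {..<n} - insert v {u. u < n \<and> E v u}"
    using \<open>v < n\<close> unfolding graph_complement_def by auto
  moreover have "card (insert v {u. u < n \<and> E v u}) = d + 1"
    using assms \<open>v < n\<close> unfolding regular_def by (simp add: simple_graph_def)
  moreover have "insert v {u. u < n \<and> E v u} \<subseteq> {..<n}"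
    using \<open>v < n\<close> by auto
  ultimately show "card {u. u < n \<and> graph_complement n E v u} = n - 1 - d"
    by (simp add: card_Diff_subset)
qed

lemma complement_private_neighbours:
  assumes "simple_graph n E" "graph_complement n E u w"
  shows "{x. graph_complement n E w x} - insert u {x. graph_complement n E u x} = {x. E u x} - {x. E w x}"
  using assms simple_graphD[OF assms(1)] unfolding graph_complement_def by blast

lemma div_eq_iff_bounds:
  fixes a c t :: nat
  assumes "0 < c"
  shows "a div c = t \<longleftrightarrow> c * t \<le> a \<and> a < c * t + c"
proof
  assume "a div c = t"
  then show "c * t \<le> a \<and> a < c * t + c"
    using div_times_less_eq_dividend[of a c] dividend_less_times_div[OF assms, of a]
    by (simp add: mult.commute)
next
  assume "c * t \<le> a \<and> a < c * t + c"
  then show "a div c = t" by (intro div_nat_eqI) (auto simp: mult.commute)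
qed

lemma simple_graph_add_cliques:
  assumes "simple_graph n0 E"
  shows "simple_graph (n0 + c * q) (add_cliques n0 c q E)"
  using assms unfolding simple_graph_def add_cliques_def
  by auto

lemma add_cliques_base:
  "simple_graph n0 E \<Longrightarrow> u < n0 \<Longrightarrow> add_cliques n0 c q E u v \<longleftrightarrow> E u v"
  using simple_graphD(2) unfolding add_cliques_def by fastforce

lemma add_cliques_cong:
  "(\<And>u v. u < n0 \<Longrightarrow> v < n0 \<Longrightarrow> E u v \<longleftrightarrow> E' u v) \<Longrightarrow> add_cliques n0 c q E = add_cliques n0 c q E'"
  unfolding add_cliques_def by (intro ext) auto

lemma card_add_cliques_clique_neighbours:
  assumes "n0 \<le> u" "u < n0 + c * q"
  shows "card {v. add_cliques n0 c q E u v} = c - 1"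
proof -
  define b where "b = n0 + c * ((u - n0) div c)"
  have "c > 0" using assms by (cases c) auto
  have "(u - n0) div c < q" using assms \<open>c > 0\<close> by (simp add: less_mult_imp_div_less mult.commute)
  then have bound: "b + c \<le> n0 + c * q"
    unfolding b_def using mult_le_mono2[of "Suc ((u - n0) div c)" q c] by simp
  have block: "n0 \<le> v \<and> (v - n0) div c = (u - n0) div c \<longleftrightarrow> b \<le> v \<and> v < b + c" for v
  proof (cases "n0 \<le> v")
    case True
    then show ?thesis
      using div_eq_iff_bounds[OF \<open>c > 0\<close>, of "v - n0" "(u - n0) div c"] unfolding b_def by linarith
  qed (simp add: b_def)
  have "{v. add_cliques n0 c q E u v} = {b..<b + c} - {u}"
  proof (rule Set.set_eqI)
    fix v
    have "add_cliques n0 c q E u v \<longleftrightarrow>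
        (n0 \<le> v \<and> (v - n0) div c = (u - n0) div c) \<and> v < n0 + c * q \<and> u \<noteq> v"
      using assms unfolding add_cliques_def by auto
    also have "\<dots> \<longleftrightarrow> v \<in> {b..<b + c} - {u}"
      unfolding block using bound by auto
    finally show "v \<in> {v. add_cliques n0 c q E u v} \<longleftrightarrow> v \<in> {b..<b + c} - {u}"
      by simp
  qed
  moreover have "u \<in> {b..<b + c}"
    using block[of u] assms(1) by simp
  ultimately show ?thesis
    by simp
qed

lemma regular_add_cliques:
  assumes "simple_graph n0 E" "regular n0 E (c - 1)"
  shows "regular (n0 + c * q) (add_cliques n0 c q E) (c - 1)"
  unfolding regular_def
proof (intro allI impI)
  fix u assume u: "u < n0 + c * q"
  have "{v. add_cliques n0 c q E u v} = {v. v < n0 + c * q \<and> add_cliques n0 c q E u v}"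
    using simple_graphD[OF simple_graph_add_cliques[OF assms(1)]] by blast
  moreover have "card {v. add_cliques n0 c q E u v} = c - 1"
  proof (cases "u < n0")
    case True
    then show ?thesis
      using card_neighbours[OF assms True] add_cliques_base[OF assms(1) True] by simp
  next
    case False
    then show ?thesis
      using card_add_cliques_clique_neighbours u by simp
  qed
  ultimately show "card {v. v < n0 + c * q \<and> add_cliques n0 c q E u v} = c - 1"
    by simp
qed

lemma add_cliques_disjoint_neighbours:
  assumes "simple_graph n0 E" "\<not> (u < n0 \<and> w < n0)" "u \<noteq> w" "\<not> add_cliques n0 c q E u w"
  shows "{x. add_cliques n0 c q E u x} \<inter> {x. add_cliques n0 c q E w x} = {}"
  using assms simple_graphD(1,2)[OF assms(1)] unfolding add_cliques_def by auto

lemma graph_complement_add_cliques_base: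
  "u < n0 \<Longrightarrow> v < n0 \<Longrightarrow>
    graph_complement (n0 + c * q) (add_cliques n0 c q E) u v \<longleftrightarrow> graph_complement n0 E u v"
  unfolding graph_complement_def add_cliques_def by auto

section \<open>Zero forcing\<close>

lemma finite_neighbours: "simple_graph n E \<Longrightarrow> finite {v. E u v}"
  by (rule finite_subset[of _ "{..<n}"]) (auto dest: simple_graphD)

lemma zero_forcing_set_all: "zero_forcing_set n E {..<n}"
  unfolding zero_forcing_set_def by (auto intro: blue.init)

lemma zero_forcing_number_le: "zero_forcing_set n E S \<Longrightarrow> zero_forcing_number n E \<le> card S"
  unfolding zero_forcing_number_def by (auto intro: Least_le)

lemma obtain_minimum_zero_forcing_set:
  obtains S where "zero_forcing_set n E S" "card S = zero_forcing_number n E"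
  using LeastI_ex[of "\<lambda>k. \<exists>S. zero_forcing_set n E S \<and> card S = k"] zero_forcing_set_all
  unfolding zero_forcing_number_def by blast

definition force_closed :: "nat \<Rightarrow> (nat \<Rightarrow> nat \<Rightarrow> bool) \<Rightarrow> nat set \<Rightarrow> bool" where
  "force_closed n E T \<longleftrightarrow> (\<forall>u v. u \<in> T \<and> v \<notin> T \<and> E u v \<longrightarrow> (\<exists>w<n. E u w \<and> w \<noteq> v \<and> w \<notin> T))"

lemma blue_mem_force_closed:
  assumes "blue n E S v" "S \<subseteq> T" "force_closed n E T"
  shows "v \<in> T"
  using assms(1)
proof (induction rule: blue.induct)
  case (init v)
  then show ?case using assms(2) by blast
next
  case (force u v)
  then show ?case using assms(3) unfolding force_closed_def by blast
qed

lemma zero_forcing_set_force_closed: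
  assumes "zero_forcing_set n E S" "S \<subseteq> T" "force_closed n E T"
  shows "{..<n} \<subseteq> T"
  using assms blue_mem_force_closed unfolding zero_forcing_set_def by blast

lemma closed_neighbourhood_force_closed:
  assumes "simple_graph n E"
    and private_neighbours: "\<And>u w. E u w \<Longrightarrow> card ({x. E w x} - insert u {x. E u x}) \<noteq> 1"
  shows "force_closed n E (insert u {x. E u x})"
  unfolding force_closed_def
proof (intro allI impI)
  fix w v assume wv: "w \<in> insert u {x. E u x} \<and> v \<notin> insert u {x. E u x} \<and> E w v"
  then have "E u w"
    by blast
  let ?P = "{x. E w x} - insert u {x. E u x}"
  have "v \<in> ?P"
    using wv by blast
  then have "?P \<noteq> {v}"
    using private_neighbours[OF \<open>E u w\<close>] by force
  then obtain x where "x \<in> ?P" "x \<noteq> v"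
    using \<open>v \<in> ?P\<close> by blast
  then show "\<exists>x<n. E w x \<and> x \<noteq> v \<and> x \<notin> insert u {x. E u x}"
    using simple_graphD(2)[OF assms(1), of w x] by blast
qed

lemma small_zero_forcing_set_in_closed_neighbourhood:
  assumes "simple_graph n E" "regular n E d" "d < n" "zero_forcing_set n E S" "card S \<le> d"
  obtains u where "u < n" "S \<subseteq> insert u {x. E u x}"
proof -
  have "finite S"
    using assms(4) finite_subset unfolding zero_forcing_set_def by blast
  have "\<not> force_closed n E S"
  proof
    assume "force_closed n E S"
    then have "{..<n} \<subseteq> S"
      by (rule zero_forcing_set_force_closed[OF assms(4) order_refl])
    then have "n \<le> card S"
      using card_mono[OF \<open>finite S\<close>] by (metis card_lessThan)
    then show False
      using assms(3,5) by linarith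
  qed
  then obtain u v where uv: "u \<in> S" "v \<notin> S" "E u v" "\<not> (\<exists>w<n. E u w \<and> w \<noteq> v \<and> w \<notin> S)"
    unfolding force_closed_def by blast
  have "u < n"
    using uv(3) simple_graphD[OF assms(1)] by blast
  have N: "card {x. E u x} = d" "finite {x. E u x}" "u \<notin> {x. E u x}"
    using card_neighbours[OF assms(1,2) \<open>u < n\<close>] finite_neighbours[OF assms(1)]
      simple_graphD(4)[OF assms(1), of u u] by auto
  have sub: "insert u ({x. E u x} - {v}) \<subseteq> S"
    using uv simple_graphD(2)[OF assms(1), of u] by blast
  have "d > 0"
    using N uv(3) card_gt_0_iff by blast
  then have "card (insert u ({x. E u x} - {v})) = d"
    using N uv(3) by (simp add: card_Diff_singleton)
  then have "S = insert u ({x. E u x} - {v})"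
    using card_subset_eq[OF \<open>finite S\<close> sub] card_mono[OF \<open>finite S\<close> sub] assms(5) by simp
  then show ?thesis
    using that \<open>u < n\<close> by blast
qed

lemma regular_degree_less_zero_forcing_number:
  assumes "simple_graph n E" "regular n E d" "d + 1 < n"
    and private_neighbours: "\<And>u w. E u w \<Longrightarrow> card ({x. E w x} - insert u {x. E u x}) \<noteq> 1"
  shows "d < zero_forcing_number n E"
proof (rule ccontr)
  assume "\<not> d < zero_forcing_number n E"
  moreover obtain S where S: "zero_forcing_set n E S" "card S = zero_forcing_number n E"
    by (rule obtain_minimum_zero_forcing_set)
  ultimately obtain u where "u < n" "S \<subseteq> insert u {x. E u x}"
    using small_zero_forcing_set_in_closed_neighbourhood[OF assms(1,2) _ S(1)] assms(3) by force
  then have "{..<n} \<subseteq> insert u {x. E u x}"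
    using zero_forcing_set_force_closed[OF S(1) _ closed_neighbourhood_force_closed[OF assms(1) private_neighbours]]
    by blast
  moreover have "card (insert u {x. E u x}) \<le> d + 1"
    using card_neighbours[OF assms(1,2) \<open>u < n\<close>] finite_neighbours[OF assms(1), of u]
    by (simp add: card_insert_if)
  ultimately show False
    using card_mono[of "insert u {x. E u x}" "{..<n}"] finite_neighbours[OF assms(1)] assms(3) by simp
qed

text \<open>A list of forces \<open>(u, v)\<close> in chronological order, starting from the set of all
  vertices that are not forced by the list.\<close>
fun forcing_chain :: "nat \<Rightarrow> (nat \<Rightarrow> nat \<Rightarrow> bool) \<Rightarrow> (nat \<times> nat) list \<Rightarrow> bool" where
  "forcing_chain n E [] \<longleftrightarrow> True"
| "forcing_chain n E ((u, v) # fs) \<longleftrightarrow>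
     u < n \<and> v < n \<and> E u v \<and> u \<notin> insert v (snd ` set fs) \<and> v \<notin> snd ` set fs \<and>
     (\<forall>w \<in> snd ` set fs. \<not> E u w) \<and> forcing_chain n E fs"

lemma blue_forcing_chain:
  assumes "forcing_chain n E fs" "\<And>v. v < n \<Longrightarrow> v \<notin> snd ` set fs \<Longrightarrow> blue n E S v" "v < n"
  shows "blue n E S v"
  using assms
proof (induction fs arbitrary: v)
  case Nil
  then show ?case by simp
next
  case (Cons f fs)
  obtain u w where f: "f = (u, w)" by fastforce
  let ?W = "snd ` set fs"
  have chain: "u < n" "w < n" "E u w" "u \<notin> insert w ?W" "w \<notin> ?W" "\<forall>x\<in>?W. \<not> E u x"
    "forcing_chain n E fs"
    using Cons.prems(1) unfolding f by simp_all
  have blue_outside: "blue n E S x" if "x < n" "x \<noteq> w" "x \<notin> ?W" for x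
    using Cons.prems(2) that unfolding f by simp
  have "blue n E S w"
  proof (rule blue.force)
    show "blue n E S u"
      using blue_outside chain by blast
    show "\<forall>x. x < n \<and> E u x \<and> x \<noteq> w \<longrightarrow> blue n E S x"
      using blue_outside chain by blast
  qed (use chain in blast)+
  then have "blue n E S x" if "x < n" "x \<notin> ?W" for x
    using blue_outside that by (cases "x = w") simp_all
  then show ?case
    using Cons.IH chain(7) Cons.prems(3) by blast
qed

lemma forcing_chain_forced:
  "forcing_chain n E fs \<Longrightarrow> distinct (map snd fs) \<and> snd ` set fs \<subseteq> {..<n}"
proof (induction fs)
  case (Cons f fs)
  then show ?case by (cases f) (simp add: image_iff)
qed simp

lemma zero_forcing_number_le_forcing_chain:
  assumes "forcing_chain n E fs"
  shows "zero_forcing_number n E \<le> n - length fs"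
proof -
  let ?S = "{..<n} - snd ` set fs"
  have "zero_forcing_set n E ?S"
    unfolding zero_forcing_set_def
    using blue_forcing_chain[OF assms] by (simp add: blue.init)
  moreover have "card ?S = n - length fs"
    using forcing_chain_forced[OF assms] distinct_card[of "map snd fs"]
    by (simp add: card_Diff_subset)
  ultimately show ?thesis
    using zero_forcing_number_le by metis
qed

lemma forcing_chain_extend:
  assumes "forcing_chain m E fs" "m \<le> n" "\<And>u v. u < m \<Longrightarrow> v < m \<Longrightarrow> F u v \<longleftrightarrow> E u v"
  shows "forcing_chain n F fs"
  using assms(1)
proof (induction fs)
  case (Cons f fs)
  obtain u v where f: "f = (u, v)" by fastforce
  have chain: "u < m" "v < m" "E u v" "u \<notin> insert v (snd ` set fs)" "v \<notin> snd ` set fs"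
    "\<forall>w\<in>snd ` set fs. \<not> E u w" "forcing_chain m E fs"
    using Cons.prems unfolding f by simp_all
  moreover have "snd ` set fs \<subseteq> {..<m}"
    using forcing_chain_forced[OF chain(7)] by simp
  ultimately have "\<forall>w\<in>snd ` set fs. \<not> F u w"
    using assms(3) by blast
  then show ?case
    using Cons.IH chain assms(2,3) unfolding f by simp
qed simp

section \<open>Godsil-McKay switching\<close>

lemma char_poly_eq_if_intertwined:
  fixes A B Q :: "'a :: comm_ring_1 mat"
  assumes "A \<in> carrier_mat n n" "B \<in> carrier_mat n n" "Q \<in> carrier_mat n n"
    and "Q * Q = 1\<^sub>m n" "A * Q = Q * B"
  shows "char_poly A = char_poly B"
proof -
  have "A = A * Q * Q"
    using assms(1,3,4) by (simp add: assoc_mult_mat[of A n n Q n Q n])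
  also have "\<dots> = Q * B * Q"
    using assms(5) by simp
  finally have "similar_mat A B"
    using assms by (intro similar_matI[of A B Q Q n]) simp_all
  then show ?thesis
    by (rule char_poly_similar)
qed

definition gm_switching_set :: "nat \<Rightarrow> (nat \<Rightarrow> nat \<Rightarrow> bool) \<Rightarrow> nat set \<Rightarrow> bool" where
  "gm_switching_set n E D \<longleftrightarrow> D \<subseteq> {..<n} \<and> D \<noteq> {} \<and> even (card D) \<and>
     (\<exists>r. \<forall>u\<in>D. card {w\<in>D. E u w} = r) \<and>
     (\<forall>v<n. v \<notin> D \<longrightarrow> card {w\<in>D. E v w} \<in> {0, card D div 2, card D})"

definition gm_switch :: "nat set \<Rightarrow> (nat \<Rightarrow> nat \<Rightarrow> bool) \<Rightarrow> nat \<Rightarrow> nat \<Rightarrow> bool" where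
  "gm_switch D E u v \<longleftrightarrow>
     (if u \<in> D \<and> v \<notin> D \<and> 2 * card {w\<in>D. E v w} = card D \<or>
         v \<in> D \<and> u \<notin> D \<and> 2 * card {w\<in>D. E u w} = card D
      then \<not> E u v else E u v)"

text \<open>The involution that intertwines the adjacency matrices of a graph and of its switch.\<close>
definition gm_matrix :: "nat \<Rightarrow> nat set \<Rightarrow> real mat" where
  "gm_matrix n D = mat n n (\<lambda>(i, j).
     (if i \<in> D \<and> j \<in> D then 2 / card D else 0) + (if i = j then if i \<in> D then -1 else 1 else 0))"

lemma sum_lessThan_indicator:
  fixes f :: "nat \<Rightarrow> real"
  assumes "D \<subseteq> {..<n}"
  shows "(\<Sum>l\<in>{0..<n}. if l \<in> D then f l else 0) = sum f D"
proof -
  have "D = {0..<n} \<inter> D" using assms by auto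
  then show ?thesis by (simp add: sum.inter_restrict[symmetric])
qed

lemma mult_gm_matrix_index:
  assumes "A \<in> carrier_mat n n" "D \<subseteq> {..<n}" "i < n" "j < n"
  shows "(A * gm_matrix n D) $$ (i, j) =
    (if j \<in> D then 2 / card D * (\<Sum>l\<in>D. A $$ (i, l)) - A $$ (i, j) else A $$ (i, j))"
proof -
  have "(A * gm_matrix n D) $$ (i, j) =
      (\<Sum>l\<in>{0..<n}. if l \<in> D \<and> j \<in> D then 2 / card D * A $$ (i, l) else 0)
      + (if j \<in> D then - A $$ (i, j) else A $$ (i, j))"
    using assms by (simp add: gm_matrix_def scalar_prod_def algebra_simps sum.distrib
        sum_subtractf if_distrib[of "\<lambda>x. _ * x"] cong: if_cong)
  also have "\<dots> = (if j \<in> D then 2 / card D * (\<Sum>l\<in>D. A $$ (i, l)) - A $$ (i, j) else A $$ (i, j))"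
    by (cases "j \<in> D") (simp_all add: sum_lessThan_indicator[OF assms(2)] sum_distrib_left)
  finally show ?thesis .
qed

lemma gm_matrix_mult_index:
  assumes "A \<in> carrier_mat n n" "D \<subseteq> {..<n}" "i < n" "j < n"
  shows "(gm_matrix n D * A) $$ (i, j) =
    (if i \<in> D then 2 / card D * (\<Sum>l\<in>D. A $$ (l, j)) - A $$ (i, j) else A $$ (i, j))"
proof -
  have "(gm_matrix n D * A) $$ (i, j) =
      (\<Sum>l\<in>{0..<n}. if i \<in> D \<and> l \<in> D then 2 / card D * A $$ (l, j) else 0)
      + (if i \<in> D then - A $$ (i, j) else A $$ (i, j))"
    using assms by (simp add: gm_matrix_def scalar_prod_def distrib_right sum.distrib
        if_distrib[of "\<lambda>x. x * _"] cong: if_cong)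
  also have "\<dots> = (if i \<in> D then 2 / card D * (\<Sum>l\<in>D. A $$ (l, j)) - A $$ (i, j) else A $$ (i, j))"
    by (cases "i \<in> D") (simp_all add: sum_lessThan_indicator[OF assms(2)] sum_distrib_left)
  finally show ?thesis .
qed

lemma gm_matrix_carrier: "gm_matrix n D \<in> carrier_mat n n"
  unfolding gm_matrix_def by simp

lemma gm_matrix_involution:
  assumes "D \<subseteq> {..<n}" "D \<noteq> {}"
  shows "gm_matrix n D * gm_matrix n D = 1\<^sub>m n"
proof (rule eq_matI)
  fix i j assume "i < dim_row (1\<^sub>m n :: real mat)" "j < dim_col (1\<^sub>m n :: real mat)"
  then have ij: "i < n" "j < n" by simp_all
  have "finite D"
    using finite_subset[OF assms(1) finite_lessThan] .
  then have "card D > 0"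
    using assms(2) by (simp add: card_gt_0_iff)
  have Q: "gm_matrix n D $$ (a, b) =
      (if a \<in> D \<and> b \<in> D then 2 / card D else 0) + (if a = b then if a \<in> D then -1 else 1 else 0)"
    if "a < n" "b < n" for a b
    using that unfolding gm_matrix_def by simp
  have row_sum: "(\<Sum>l\<in>D. gm_matrix n D $$ (i, l)) = (if i \<in> D then 1 else 0)"
  proof -
    have "(\<Sum>l\<in>D. gm_matrix n D $$ (i, l)) =
        (\<Sum>l\<in>D. (if i \<in> D then 2 / card D else 0) + (if l = i then if i \<in> D then -1 else 1 else 0))"
      using Q ij assms(1) by (intro sum.cong) auto
    also have "\<dots> = (if i \<in> D then 1 else 0)"
      using \<open>finite D\<close> \<open>card D > 0\<close> by (simp add: sum.distrib)
    finally show ?thesis .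
  qed
  show "(gm_matrix n D * gm_matrix n D) $$ (i, j) = 1\<^sub>m n $$ (i, j)"
    using mult_gm_matrix_index[OF gm_matrix_carrier assms(1) ij] row_sum Q[OF ij] ij \<open>card D > 0\<close>
    by auto
qed (simp_all add: gm_matrix_def)

lemma gm_switch_commute:
  assumes "simple_graph n E"
  shows "gm_switch D E u v \<longleftrightarrow> gm_switch D E v u"
proof -
  have "E u v \<longleftrightarrow> E v u"
    using simple_graphD(3)[OF assms] by blast
  then show ?thesis
    unfolding gm_switch_def by auto
qed

lemma gm_switch_inside: "u \<in> D \<Longrightarrow> v \<in> D \<Longrightarrow> gm_switch D E u v \<longleftrightarrow> E u v"
  unfolding gm_switch_def by simp

lemma gm_switch_outside: "u \<notin> D \<Longrightarrow> v \<notin> D \<Longrightarrow> gm_switch D E u v \<longleftrightarrow> E u v"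
  unfolding gm_switch_def by simp

lemma card_gm_switch_neighbours:
  assumes "finite D"
  shows "card {l\<in>D. gm_switch D E v l} = card {l\<in>D. E v l}"
proof (cases "v \<notin> D \<and> 2 * card {l\<in>D. E v l} = card D")
  case True
  then have "{l\<in>D. gm_switch D E v l} = D - {l\<in>D. E v l}"
    unfolding gm_switch_def by auto
  then have "card {l\<in>D. gm_switch D E v l} = card D - card {l\<in>D. E v l}"
    using assms by (simp add: card_Diff_subset)
  moreover have "2 * card {l\<in>D. E v l} = card D"
    using True by blast
  ultimately show ?thesis
    by linarith
next
  case False
  then have "{l\<in>D. gm_switch D E v l} = {l\<in>D. E v l}"
    unfolding gm_switch_def by auto
  then show ?thesis by simp
qed

lemma gm_switch_entry_outside:
  assumes "gm_switching_set n E D" "v < n" "v \<notin> D" "w \<in> D"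
  shows "(if gm_switch D E v w then 1 else 0 :: real) =
    2 / card D * card {l\<in>D. E v l} - (if E v w then 1 else 0)"
proof -
  let ?N = "{l\<in>D. E v l}"
  have "finite D" "D \<noteq> {}" "even (card D)"
    using assms(1) unfolding gm_switching_set_def by (auto intro: finite_subset)
  then have "card D > 0" by (simp add: card_gt_0_iff)
  have "card ?N \<in> {0, card D div 2, card D}"
    using assms(1-3) unfolding gm_switching_set_def by blast
  then consider "card ?N = 0" | "2 * card ?N = card D" | "card ?N = card D"
    using \<open>even (card D)\<close> by fastforce
  then show ?thesis
  proof cases
    case 1
    then have "\<not> E v w" using \<open>finite D\<close> assms(4) by auto
    then show ?thesis using 1 \<open>card D > 0\<close> assms(3,4) unfolding gm_switch_def by simp
  next
    case 2
    then show ?thesis using assms(3,4) \<open>card D > 0\<close> unfolding gm_switch_def by simp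
  next
    case 3
    then have "?N = D" using \<open>finite D\<close> by (metis (no_types, lifting) card_subset_eq mem_Collect_eq subsetI)
    then have "E v w" using assms(4) by blast
    then show ?thesis using 3 \<open>card D > 0\<close> assms(3,4) unfolding gm_switch_def by simp
  qed
qed

lemma adj_matrix_carrier: "adj_matrix n E \<in> carrier_mat n n"
  unfolding adj_matrix_def by simp

lemma adj_matrix_index: "i < n \<Longrightarrow> j < n \<Longrightarrow> adj_matrix n E $$ (i, j) = (if E i j then 1 else 0)"
  unfolding adj_matrix_def by simp

lemma sum_adj_matrix_row:
  assumes "D \<subseteq> {..<n}" "i < n"
  shows "(\<Sum>l\<in>D. adj_matrix n E $$ (i, l)) = card {l\<in>D. E i l}"
proof -
  have "finite D" using finite_subset[OF assms(1) finite_lessThan] .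
  have "(\<Sum>l\<in>D. adj_matrix n E $$ (i, l)) = (\<Sum>l\<in>D. of_bool (E i l))"
    using assms by (intro sum.cong) (auto simp: adj_matrix_index)
  also have "\<dots> = card {l\<in>D. E i l}"
    using \<open>finite D\<close> by (simp add: Collect_conj_eq Int_commute)
  finally show ?thesis .
qed

lemma sum_adj_matrix_gm_switch_column:
  assumes "simple_graph n E" "D \<subseteq> {..<n}" "j < n"
  shows "(\<Sum>l\<in>D. adj_matrix n (gm_switch D E) $$ (l, j)) = card {l\<in>D. E j l}"
proof -
  have "finite D" using finite_subset[OF assms(2) finite_lessThan] .
  have "(\<Sum>l\<in>D. adj_matrix n (gm_switch D E) $$ (l, j)) = (\<Sum>l\<in>D. adj_matrix n (gm_switch D E) $$ (j, l))"
    using assms(2,3) gm_switch_commute[OF assms(1)] by (intro sum.cong) (auto simp: adj_matrix_index)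
  then show ?thesis
    using sum_adj_matrix_row[OF assms(2,3)] card_gm_switch_neighbours[OF \<open>finite D\<close>] by simp
qed

lemma adj_matrix_gm_switch_intertwined:
  assumes "simple_graph n E" "gm_switching_set n E D"
  shows "adj_matrix n E * gm_matrix n D = gm_matrix n D * adj_matrix n (gm_switch D E)"
    (is "?A * ?Q = ?Q * ?B")
proof (rule eq_matI)
  let ?dg = "\<lambda>v. real (card {l\<in>D. E v l})"
  have D: "D \<subseteq> {..<n}"
    using assms(2) unfolding gm_switching_set_def by blast
  obtain r where r: "\<And>u. u \<in> D \<Longrightarrow> card {w\<in>D. E u w} = r"
    using assms(2) unfolding gm_switching_set_def by blast
  fix i j assume "i < dim_row (?Q * ?B)" "j < dim_col (?Q * ?B)"
  then have ij: "i < n" "j < n" by (simp_all add: gm_matrix_def adj_matrix_def)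
  have lhs: "(?A * ?Q) $$ (i, j) = (if j \<in> D then 2 / card D * ?dg i - ?A $$ (i, j) else ?A $$ (i, j))"
    using mult_gm_matrix_index[OF adj_matrix_carrier D ij] sum_adj_matrix_row[OF D ij(1)] by simp
  have rhs: "(?Q * ?B) $$ (i, j) = (if i \<in> D then 2 / card D * ?dg j - ?B $$ (i, j) else ?B $$ (i, j))"
    using gm_matrix_mult_index[OF adj_matrix_carrier D ij] sum_adj_matrix_gm_switch_column[OF assms(1) D ij(2)]
    by simp
  show "(?A * ?Q) $$ (i, j) = (?Q * ?B) $$ (i, j)"
  proof (cases "i \<in> D"; cases "j \<in> D")
    assume "i \<in> D" "j \<in> D"
    then show ?thesis using lhs rhs r ij by (simp add: adj_matrix_index gm_switch_inside)
  next
    assume "i \<in> D" "j \<notin> D"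
    then show ?thesis
      using lhs rhs ij gm_switch_entry_outside[OF assms(2) ij(2), of i] gm_switch_commute[OF assms(1)]
        simple_graphD(3)[OF assms(1)]
      by (auto simp: adj_matrix_index)
  next
    assume "i \<notin> D" "j \<in> D"
    then show ?thesis
      using lhs rhs ij gm_switch_entry_outside[OF assms(2) ij(1), of j] by (simp add: adj_matrix_index)
  next
    assume "i \<notin> D" "j \<notin> D"
    then show ?thesis using lhs rhs ij by (simp add: adj_matrix_index gm_switch_outside)
  qed
qed (simp_all add: gm_matrix_def adj_matrix_def)

lemma cospectral_gm_switch:
  assumes "simple_graph n E" "gm_switching_set n E D"
  shows "cospectral n E n (gm_switch D E)"
proof -
  have "D \<subseteq> {..<n}" "D \<noteq> {}"
    using assms(2) unfolding gm_switching_set_def by simp_all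
  then show ?thesis
    unfolding cospectral_def
    using char_poly_eq_if_intertwined[OF adj_matrix_carrier adj_matrix_carrier gm_matrix_carrier
        gm_matrix_involution adj_matrix_gm_switch_intertwined[OF assms]] by blast
qed

lemma gm_switching_set_complement:
  assumes "simple_graph n E" "gm_switching_set n E D"
  shows "gm_switching_set n (graph_complement n E) D"
proof -
  have D: "D \<subseteq> {..<n}" "finite D"
    using assms(2) finite_subset unfolding gm_switching_set_def by auto
  obtain r where r: "\<And>u. u \<in> D \<Longrightarrow> card {w\<in>D. E u w} = r"
    using assms(2) unfolding gm_switching_set_def by blast
  have inside: "card {w\<in>D. graph_complement n E u w} = card D - 1 - r" if "u \<in> D" for u
  proof -
    have "{w\<in>D. graph_complement n E u w} = D - insert u {w\<in>D. E u w}"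
      using D(1) that unfolding graph_complement_def by auto
    moreover have "card (insert u {w\<in>D. E u w}) = r + 1"
      using r[OF that] D(2) simple_graphD(4)[OF assms(1), of u u] by (subst card_insert_disjoint) auto
    ultimately show ?thesis
      using D(2) that by (simp add: card_Diff_subset)
  qed
  have outside: "card {w\<in>D. graph_complement n E v w} = card D - card {w\<in>D. E v w}"
    if "v < n" "v \<notin> D" for v
  proof -
    have "{w\<in>D. graph_complement n E v w} = D - {w\<in>D. E v w}"
      using D(1) that unfolding graph_complement_def by auto
    then show ?thesis
      using D(2) by (simp add: card_Diff_subset)
  qed
  have "card {w\<in>D. graph_complement n E v w} \<in> {0, card D div 2, card D}" if "v < n" "v \<notin> D" for v
  proof -
    have "card {w\<in>D. E v w} \<in> {0, card D div 2, card D}" "even (card D)"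
      using assms(2) that unfolding gm_switching_set_def by blast+
    then show ?thesis
      unfolding outside[OF that] by (auto elim!: evenE)
  qed
  then show ?thesis
    using assms(2) inside unfolding gm_switching_set_def by blast
qed

lemma gm_switch_complement:
  assumes "simple_graph n E" "D \<subseteq> {..<n}" "D \<noteq> {}"
  shows "gm_switch D (graph_complement n E) = graph_complement n (gm_switch D E)"
proof (intro ext)
  fix u v
  have "finite D" using finite_subset[OF assms(2) finite_lessThan] .
  then have "card D > 0" using assms(3) by (simp add: card_gt_0_iff)
  have half: "2 * card {w\<in>D. graph_complement n E x w} = card D \<longleftrightarrow>
      x < n \<and> 2 * card {w\<in>D. E x w} = card D" if "x \<notin> D" for x
  proof (cases "x < n")
    case True
    have "{w\<in>D. graph_complement n E x w} = D - {w\<in>D. E x w}"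
      using assms(2) that True unfolding graph_complement_def by auto
    then show ?thesis
      using True \<open>finite D\<close> card_mono[of D "{w\<in>D. E x w}"] by (simp add: card_Diff_subset) linarith
  next
    case False
    then show ?thesis
      using \<open>card D > 0\<close> unfolding graph_complement_def by simp
  qed
  have "u \<in> D \<Longrightarrow> u < n" "v \<in> D \<Longrightarrow> v < n"
    using assms(2) by auto
  then show "gm_switch D (graph_complement n E) u v \<longleftrightarrow> graph_complement n (gm_switch D E) u v"
    using half[of u] half[of v] unfolding gm_switch_def graph_complement_def by auto
qed

lemma add_cliques_neighbours_in_base:
  assumes "simple_graph n0 E" "D \<subseteq> {..<n0}"
  shows "{w\<in>D. add_cliques n0 c q E v w} = {w\<in>D. E v w}"
  using assms simple_graphD(1)[OF assms(1), of v] unfolding add_cliques_def by auto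

lemma gm_switching_set_add_cliques:
  assumes "simple_graph n0 E" "gm_switching_set n0 E D"
  shows "gm_switching_set (n0 + c * q) (add_cliques n0 c q E) D"
proof -
  have D: "D \<subseteq> {..<n0}"
    using assms(2) unfolding gm_switching_set_def by blast
  have "card {w\<in>D. E v w} \<in> {0, card D div 2, card D}" if "v \<notin> D" for v
  proof (cases "v < n0")
    case True
    then show ?thesis using assms(2) that unfolding gm_switching_set_def by blast
  next
    case False
    then have empty: "{w\<in>D. E v w} = {}"
      using simple_graphD(1)[OF assms(1), of v] by auto
    show ?thesis unfolding empty by simp
  qed
  then show ?thesis
    using assms(2) D unfolding gm_switching_set_def add_cliques_neighbours_in_base[OF assms(1) D]
    by auto
qed

lemma gm_switch_add_cliques:
  assumes "simple_graph n0 E" "D \<subseteq> {..<n0}"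
  shows "gm_switch D (add_cliques n0 c q E) = add_cliques n0 c q (gm_switch D E)"
proof (intro ext)
  fix u v
  have "finite D" using finite_subset[OF assms(2) finite_lessThan] .
  have in_base: "x < n0" if "2 * card {w\<in>D. E x w} = card D" "D \<noteq> {}" for x
  proof (rule ccontr)
    assume "\<not> x < n0"
    then have empty: "{w\<in>D. E x w} = {}"
      using simple_graphD(1)[OF assms(1), of x] by auto
    have "card D = 0"
      using that(1) unfolding empty by simp
    then show False
      using that(2) \<open>finite D\<close> by simp
  qed
  show "gm_switch D (add_cliques n0 c q E) u v \<longleftrightarrow> add_cliques n0 c q (gm_switch D E) u v"
    using in_base[of u] in_base[of v] assms(2)
    unfolding gm_switch_def add_cliques_neighbours_in_base[OF assms] unfolding add_cliques_def
    by auto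
qed

section \<open>The construction\<close>

lemma cospectral_complement_add_cliques_switch:
  fixes c q :: nat
  assumes "simple_graph n0 H" "gm_switching_set n0 H D"
    and switched: "\<And>u v. u < n0 \<Longrightarrow> v < n0 \<Longrightarrow> H' u v \<longleftrightarrow> gm_switch D H u v"
  defines "n \<equiv> n0 + c * q"
  shows "cospectral n (graph_complement n (add_cliques n0 c q H))
      n (graph_complement n (add_cliques n0 c q H'))"
proof -
  let ?H = "add_cliques n0 c q H"
  have simple: "simple_graph n ?H"
    using simple_graph_add_cliques[OF assms(1)] unfolding n_def .
  have "D \<subseteq> {..<n0}" "D \<noteq> {}"
    using assms(2) unfolding gm_switching_set_def by simp_all
  moreover have "D \<subseteq> {..<n}"
    using \<open>D \<subseteq> {..<n0}\<close> unfolding n_def by auto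
  ultimately have "gm_switch D (graph_complement n ?H) = graph_complement n (add_cliques n0 c q H')"
    using gm_switch_complement[OF simple] gm_switch_add_cliques[OF assms(1)] add_cliques_cong[OF switched]
    by simp
  moreover have "gm_switching_set n (graph_complement n ?H) D"
    using gm_switching_set_complement[OF simple] gm_switching_set_add_cliques[OF assms(1,2)]
    unfolding n_def by blast
  ultimately show ?thesis
    using cospectral_gm_switch[OF simple_graph_complement[OF simple]] by metis
qed

lemma regular_complement_add_cliques:
  fixes q :: nat
  assumes "simple_graph n0 H" "regular n0 H (c - 1)" "c > 0"
  defines "n \<equiv> n0 + c * q"
  shows "regular n (graph_complement n (add_cliques n0 c q H)) (n - c)"
proof -
  have "n - 1 - (c - 1) = n - c"
    using assms(3) by simp
  then show ?thesis
    using regular_complement[OF simple_graph_add_cliques[OF assms(1)] regular_add_cliques[OF assms(1,2)], of q]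
    unfolding n_def by simp
qed

lemma zero_forcing_number_complement_add_cliques_gt:
  fixes q :: nat
  assumes H: "simple_graph n0 H" "regular n0 H (c - 1)" and "3 \<le> c" "c \<le> n0"
    and private_neighbours:
      "\<And>u w. u < n0 \<Longrightarrow> w < n0 \<Longrightarrow> u \<noteq> w \<Longrightarrow> \<not> H u w \<Longrightarrow> card ({x. H u x} - {x. H w x}) \<noteq> 1"
  defines "n \<equiv> n0 + c * q"
  shows "n - c < zero_forcing_number n (graph_complement n (add_cliques n0 c q H))"
proof -
  let ?H = "add_cliques n0 c q H" and ?G = "graph_complement n (add_cliques n0 c q H)"
  have simple: "simple_graph n ?H"
    using simple_graph_add_cliques[OF H(1)] unfolding n_def .
  have regular: "regular n ?H (c - 1)"
    using regular_add_cliques[OF H] unfolding n_def .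
  have "n - c + 1 < n"
    using assms(3,4) unfolding n_def by simp
  show ?thesis
  proof (rule regular_degree_less_zero_forcing_number[OF simple_graph_complement[OF simple] _ \<open>n - c + 1 < n\<close>])
    show "regular n ?G (n - c)"
      using regular_complement_add_cliques[OF H, of q] assms(3) unfolding n_def by simp
    fix u w assume "?G u w"
    then have "u < n" "u \<noteq> w" "\<not> ?H u w"
      unfolding graph_complement_def by simp_all
    show "card ({x. ?G w x} - insert u {x. ?G u x}) \<noteq> 1"
      unfolding complement_private_neighbours[OF simple \<open>?G u w\<close>]
    proof (cases "u < n0 \<and> w < n0")
      case True
      then show "card ({x. ?H u x} - {x. ?H w x}) \<noteq> 1"
        using private_neighbours \<open>u \<noteq> w\<close> \<open>\<not> ?H u w\<close> add_cliques_base[OF H(1)] by simp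
    next
      case False
      then have "{x. ?H u x} - {x. ?H w x} = {x. ?H u x}"
        using add_cliques_disjoint_neighbours[OF H(1) False \<open>u \<noteq> w\<close> \<open>\<not> ?H u w\<close>] by blast
      then show "card ({x. ?H u x} - {x. ?H w x}) \<noteq> 1"
        using card_neighbours[OF simple regular \<open>u < n\<close>] assms(3) by simp
    qed
  qed
qed

lemma zero_forcing_number_complement_add_cliques_le:
  fixes c q :: nat
  assumes "forcing_chain n0 (graph_complement n0 H) fs"
  defines "n \<equiv> n0 + c * q"
  shows "zero_forcing_number n (graph_complement n (add_cliques n0 c q H)) \<le> n - length fs"
proof -
  have "forcing_chain n (graph_complement n (add_cliques n0 c q H)) fs"
    by (rule forcing_chain_extend[OF assms(1)]) (simp_all add: n_def graph_complement_add_cliques_base)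
  then show ?thesis
    by (rule zero_forcing_number_le_forcing_chain)
qed

definition cospectral_pair_distinct_zf :: "nat \<Rightarrow> bool" where
  "cospectral_pair_distinct_zf d \<longleftrightarrow> (\<exists>n E m F. simple_graph n E \<and> simple_graph m F \<and>
     regular n E d \<and> regular m F d \<and> cospectral n E m F \<and>
     zero_forcing_number n E \<noteq> zero_forcing_number m F)"

lemma cospectral_pair_distinct_zf_of_switched_base:
  assumes H: "simple_graph n0 H" "regular n0 H (c - 1)"
    and H': "simple_graph n0 H'" "regular n0 H' (c - 1)"
    and switching: "gm_switching_set n0 H D" "\<And>u v. u < n0 \<Longrightarrow> v < n0 \<Longrightarrow> H' u v \<longleftrightarrow> gm_switch D H u v"
    and c: "3 \<le> c" "c \<le> n0"
    and private_neighbours: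
      "\<And>u w. u < n0 \<Longrightarrow> w < n0 \<Longrightarrow> u \<noteq> w \<Longrightarrow> \<not> H u w \<Longrightarrow> card ({x. H u x} - {x. H w x}) \<noteq> 1"
    and chain: "forcing_chain n0 (graph_complement n0 H') fs" "length fs = c"
  shows "cospectral_pair_distinct_zf (n0 + c * q - c)"
proof -
  define n where "n = n0 + c * q"
  let ?G = "graph_complement n (add_cliques n0 c q H)"
  let ?F = "graph_complement n (add_cliques n0 c q H')"
  have "regular n ?G (n - c)" "regular n ?F (n - c)"
    using regular_complement_add_cliques[OF H] regular_complement_add_cliques[OF H'] c
    unfolding n_def by simp_all
  moreover have "simple_graph n ?G" "simple_graph n ?F"
    using simple_graph_complement simple_graph_add_cliques H(1) H'(1) unfolding n_def by blast+
  moreover have "cospectral n ?G n ?F"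
    using cospectral_complement_add_cliques_switch[OF H(1) switching] unfolding n_def .
  moreover have "zero_forcing_number n ?F < zero_forcing_number n ?G"
    using zero_forcing_number_complement_add_cliques_le[OF chain(1), of c q]
      zero_forcing_number_complement_add_cliques_gt[OF H c private_neighbours, of q] chain(2)
    unfolding n_def by linarith
  ultimately show ?thesis
    unfolding cospectral_pair_distinct_zf_def n_def[symmetric]
    by (intro exI[of _ n] exI[of _ ?G] exI[of _ n] exI[of _ ?F]) simp
qed

section \<open>Base graphs\<close>

definition list_graph :: "nat list list \<Rightarrow> nat \<Rightarrow> nat \<Rightarrow> bool" where
  "list_graph xss u v \<longleftrightarrow> u < length xss \<and> v \<in> set (xss ! u)"

definition regular_adjacency_lists :: "nat \<Rightarrow> nat list list \<Rightarrow> bool" where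
  "regular_adjacency_lists d xss \<longleftrightarrow> (\<forall>u<length xss. distinct (xss ! u) \<and> length (xss ! u) = d \<and>
     (\<forall>v\<in>set (xss ! u). v < length xss \<and> v \<noteq> u \<and> u \<in> set (xss ! v)))"

lemma list_graph_neighbours: "u < length xss \<Longrightarrow> {v. list_graph xss u v} = set (xss ! u)"
  unfolding list_graph_def by simp

lemma simple_graph_list_graph:
  "regular_adjacency_lists d xss \<Longrightarrow> simple_graph (length xss) (list_graph xss)"
  unfolding regular_adjacency_lists_def simple_graph_def list_graph_def by blast

lemma regular_list_graph:
  assumes "regular_adjacency_lists d xss"
  shows "regular (length xss) (list_graph xss) d"
  unfolding regular_def
proof (intro allI impI)
  fix u assume "u < length xss"
  then have "distinct (xss ! u)" "length (xss ! u) = d" "set (xss ! u) \<subseteq> {..<length xss}"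
    using assms unfolding regular_adjacency_lists_def by auto
  moreover have "{v. v < length xss \<and> list_graph xss u v} = {..<length xss} \<inter> set (xss ! u)"
    using \<open>u < length xss\<close> unfolding list_graph_def by auto
  ultimately show "card {v. v < length xss \<and> list_graph xss u v} = d"
    by (simp add: Int_absorb1 distinct_card)
qed

lemma cospectral_pair_distinct_zf_of_adjacency_lists:
  assumes "regular_adjacency_lists (c - 1) xss" "regular_adjacency_lists (c - 1) yss"
    and "length yss = length xss"
    and "gm_switching_set (length xss) (list_graph xss) D"
    and "\<forall>u<length xss. \<forall>v<length xss. list_graph yss u v \<longleftrightarrow> gm_switch D (list_graph xss) u v"
    and "3 \<le> c" "c \<le> length xss"
    and "\<forall>u<length xss. \<forall>w<length xss. u \<noteq> w \<longrightarrow> w \<notin> set (xss ! u) \<longrightarrow>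
      card (set (xss ! u) - set (xss ! w)) \<noteq> 1"
    and "forcing_chain (length xss) (graph_complement (length xss) (list_graph yss)) fs" "length fs = c"
  shows "cospectral_pair_distinct_zf (length xss + c * q - c)"
proof (rule cospectral_pair_distinct_zf_of_switched_base[OF simple_graph_list_graph[OF assms(1)]
      regular_list_graph[OF assms(1)] simple_graph_list_graph[OF assms(2), unfolded assms(3)]
      regular_list_graph[OF assms(2), unfolded assms(3)] assms(4) _ assms(6,7) _ assms(9,10)])
  show "list_graph yss u v \<longleftrightarrow> gm_switch D (list_graph xss) u v"
    if "u < length xss" "v < length xss" for u v
    using assms(5) that by blast
  show "card ({x. list_graph xss u x} - {x. list_graph xss w x}) \<noteq> 1"
    if "u < length xss" "w < length xss" "u \<noteq> w" "\<not> list_graph xss u w" for u w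
    using assms(8) that unfolding list_graph_neighbours[OF that(1)] list_graph_neighbours[OF that(2)]
    by (simp add: list_graph_def)
qed

lemma card_lessThan_filter: "card {w\<in>{..<m}. P w} = length (filter P [0..<m])"
proof -
  have "{w\<in>{..<m}. P w} = {x. P x} \<inter> set [0..<m]"
    by auto
  then show ?thesis
    by (simp add: distinct_length_filter)
qed

lemma all_less_numeral: "(\<forall>i<numeral n. P i) \<longleftrightarrow> P (pred_numeral n) \<and> (\<forall>i<pred_numeral n. P i)"
  by (simp add: numeral_eq_Suc All_less_Suc)

lemma lessThan_numeral: "{..<numeral n} = insert (pred_numeral n) {..<pred_numeral n}"
  by (simp add: numeral_eq_Suc lessThan_Suc)

definition base10 :: "nat list list" where
  "base10 = [[2, 3, 4, 5, 9], [2, 3, 6, 8, 9], [0, 1, 4, 6, 7], [0, 1, 5, 7, 8],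
    [0, 2, 5, 8, 9], [0, 3, 4, 6, 8], [1, 2, 5, 7, 9], [2, 3, 6, 8, 9],
    [1, 3, 4, 5, 7], [0, 1, 4, 6, 7]]"

definition base10_switched :: "nat list list" where
  "base10_switched = [[2, 3, 6, 7, 8], [2, 3, 4, 5, 7], [0, 1, 5, 8, 9], [0, 1, 4, 6, 9],
    [1, 3, 5, 8, 9], [1, 2, 4, 6, 8], [0, 3, 5, 7, 9], [0, 1, 6, 8, 9],
    [0, 2, 4, 5, 7], [2, 3, 4, 6, 7]]"

definition forces10 :: "(nat \<times> nat) list" where
  "forces10 = [(3, 5), (7, 4), (2, 6), (4, 0), (5, 9), (0, 1)]"

lemma cospectral_pair_distinct_zf_10: "cospectral_pair_distinct_zf (4 + 6 * q)"
proof -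
  have n0: "length base10 = 10" "length base10_switched = 10"
    by (simp_all add: base10_def base10_switched_def)
  have "cospectral_pair_distinct_zf (length base10 + 6 * q - 6)"
    by (rule cospectral_pair_distinct_zf_of_adjacency_lists[where D = "{..<4}" and yss = base10_switched
          and fs = forces10])
      (unfold n0 gm_switching_set_def gm_switch_def card_lessThan_filter regular_adjacency_lists_def,
       simp_all add: base10_def base10_switched_def forces10_def list_graph_def graph_complement_def
         all_less_numeral lessThan_numeral lessThan_Suc upt_rec)
  then show ?thesis
    by (simp add: n0)
qed

definition base12 :: "nat list list" where
  "base12 = [[3, 4, 6, 9, 10], [2, 4, 5, 8, 11], [1, 5, 7, 8, 9], [0, 6, 7, 10, 11],
    [0, 1, 6, 7, 8], [1, 2, 8, 9, 10], [0, 3, 4, 7, 9], [2, 3, 4, 6, 11],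
    [1, 2, 4, 5, 10], [0, 2, 5, 6, 11], [0, 3, 5, 8, 11], [1, 3, 7, 9, 10]]"

definition base12_switched :: "nat list list" where
  "base12_switched = [[3, 5, 7, 8, 11], [2, 6, 7, 9, 10], [1, 4, 6, 10, 11], [0, 4, 5, 8, 9],
    [2, 3, 6, 7, 8], [0, 3, 8, 9, 10], [1, 2, 4, 7, 9], [0, 1, 4, 6, 11],
    [0, 3, 4, 5, 10], [1, 3, 5, 6, 11], [1, 2, 5, 8, 11], [0, 2, 7, 9, 10]]"

definition forces12 :: "(nat \<times> nat) list" where
  "forces12 = [(7, 5), (2, 0), (9, 4), (10, 6), (0, 1), (1, 11)]"

lemma cospectral_pair_distinct_zf_12: "cospectral_pair_distinct_zf (6 + 6 * q)"
proof -
  have n0: "length base12 = 12" "length base12_switched = 12"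
    by (simp_all add: base12_def base12_switched_def)
  have "cospectral_pair_distinct_zf (length base12 + 6 * q - 6)"
    by (rule cospectral_pair_distinct_zf_of_adjacency_lists[where D = "{..<4}" and yss = base12_switched
          and fs = forces12])
      (unfold n0 gm_switching_set_def gm_switch_def card_lessThan_filter regular_adjacency_lists_def,
       simp_all add: base12_def base12_switched_def forces12_def list_graph_def graph_complement_def
         all_less_numeral lessThan_numeral lessThan_Suc upt_rec)
  then show ?thesis
    by (simp add: n0)
qed

definition base14 :: "nat list list" where
  "base14 = [[1, 4, 6, 11, 13], [0, 4, 9, 10, 11], [3, 7, 8, 9, 13], [2, 6, 7, 8, 10],
    [0, 1, 5, 11, 12], [4, 8, 9, 11, 12], [0, 3, 7, 8, 10], [2, 3, 6, 12, 13],
    [2, 3, 5, 6, 10], [1, 2, 5, 12, 13], [1, 3, 6, 8, 13], [0, 1, 4, 5, 12],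
    [4, 5, 7, 9, 11], [0, 2, 7, 9, 10]]"

definition base14_switched :: "nat list list" where
  "base14_switched = [[1, 7, 8, 9, 10], [0, 6, 7, 8, 13], [3, 4, 6, 10, 11], [2, 4, 9, 11, 13],
    [2, 3, 5, 11, 12], [4, 8, 9, 11, 12], [1, 2, 7, 8, 10], [0, 1, 6, 12, 13],
    [0, 1, 5, 6, 10], [0, 3, 5, 12, 13], [0, 2, 6, 8, 13], [2, 3, 4, 5, 12],
    [4, 5, 7, 9, 11], [1, 3, 7, 9, 10]]"

definition forces14 :: "(nat \<times> nat) list" where
  "forces14 = [(1, 4), (10, 7), (7, 8), (8, 13), (2, 0), (0, 6)]"

lemma cospectral_pair_distinct_zf_14: "cospectral_pair_distinct_zf (8 + 6 * q)"
proof -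
  have n0: "length base14 = 14" "length base14_switched = 14"
    by (simp_all add: base14_def base14_switched_def)
  have "cospectral_pair_distinct_zf (length base14 + 6 * q - 6)"
    by (rule cospectral_pair_distinct_zf_of_adjacency_lists[where D = "{..<4}" and yss = base14_switched
          and fs = forces14])
      (unfold n0 gm_switching_set_def gm_switch_def card_lessThan_filter regular_adjacency_lists_def,
       simp_all add: base14_def base14_switched_def forces14_def list_graph_def graph_complement_def
         all_less_numeral lessThan_numeral lessThan_Suc upt_rec)
  then show ?thesis
    by (simp add: n0)
qed

theorem theorem5p3:
  fixes k :: nat
  assumes "k \<ge> 2"
  shows "\<exists>n E m F. simple_graph n E \<and> simple_graph m F \<and>
           regular n E (2 * k) \<and> regular m F (2 * k) \<and>
           cospectral n E m F \<and>
           zero_forcing_number n E \<noteq> zero_forcing_number m F"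
proof -
  define q where "q = (k - 2) div 3"
  have "2 * k \<in> {4 + 6 * q, 6 + 6 * q, 8 + 6 * q}"
    using assms unfolding q_def by auto presburger
  then have "cospectral_pair_distinct_zf (2 * k)"
    using cospectral_pair_distinct_zf_10 cospectral_pair_distinct_zf_12 cospectral_pair_distinct_zf_14
    by auto
  then show ?thesis
    unfolding cospectral_pair_distinct_zf_def .
qed

end
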